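(* Let $X$ be a Banach space. If there exists a Banach space $Y\neq\{0\}$ such that the pair $(X,Y)$ has the uniform sBPBp, then $X$ is uniformly convex.
   Context: All Banach spaces are over $\mathbb{K}=\mathbb{R}$ or $\mathbb{C}$. $S_X$ denotes the unit sphere of $X$ and $\mathcal{L}(X,Y)$ the space of bounded linear operators from $X$ to $Y$ with the operator norm. A pair of Banach spaces $(X,Y)$ has the uniform strong Bishop–Phelps–Bollobás property (uniform sBPBp) if for every $\varepsilon>0$ there exists $\eta(\varepsilon)>0$ such that whenever $T\in\mathcal{L}(X,Y)$ with $\|T\|=1$ and $x_0\in S_X$ satisfy $\|T(x_0)\|>1-\eta(\varepsilon)$, there exists $x_1\in S_X$ with $\|T(x_1)\|=1$ and $\|x_1-x_0\|<\varepsilon$. *)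

theory Defs
  imports "HOL-Analysis.Analysis"
begin

text \<open>The class L
  encodes the scalar field: for K = R it is all bounded (real-)linear maps, for
  K = C it is the bounded maps that are complex-linear w.r.t. given complex structures.\<close>
definition uniform_sBPBp :: "(('a::real_normed_vector) \<Rightarrow> ('b::real_normed_vector)) set \<Rightarrow> bool" where
  "uniform_sBPBp L \<longleftrightarrow>
     (\<forall>\<epsilon>>0. \<exists>\<eta>>0. \<forall>T\<in>L. \<forall>x0.
        onorm T = 1 \<and> norm x0 = 1 \<and> norm (T x0) > 1 - \<eta> \<longrightarrow>
        (\<exists>x1. norm x1 = 1 \<and> norm (T x1) = 1 \<and> norm (x1 - x0) < \<epsilon>))"

text \<open>A complex structure on a real normed space: multiplication by i, compatible with the
  norm, so that (a + i b) x := a x + b J x makes the space a complex normed space.\<close>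
definition complex_structure :: "('a::real_normed_vector \<Rightarrow> 'a) \<Rightarrow> bool" where
  "complex_structure J \<longleftrightarrow> linear J \<and> (\<forall>x. J (J x) = - x) \<and>
     (\<forall>a b x. norm (a *\<^sub>R x + b *\<^sub>R J x) = sqrt (a\<^sup>2 + b\<^sup>2) * norm x)"

definition real_operators :: "(('a::real_normed_vector) \<Rightarrow> ('b::real_normed_vector)) set" where
  "real_operators = {T. bounded_linear T}"

definition complex_operators ::
  "('a::real_normed_vector \<Rightarrow> 'a) \<Rightarrow> ('b::real_normed_vector \<Rightarrow> 'b) \<Rightarrow> ('a \<Rightarrow> 'b) set" where
  "complex_operators JX JY = {T. bounded_linear T \<and> (\<forall>x. T (JX x) = JY (T x))}"

text \<open>Uniform convexity (definition independent of the scalar field).\<close>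
definition uniformly_convex :: "'a::real_normed_vector itself \<Rightarrow> bool" where
  "uniformly_convex _ \<longleftrightarrow>
     (\<forall>\<epsilon>>0. \<exists>\<delta>>0. \<forall>x y::'a. norm x = 1 \<and> norm y = 1 \<and> norm (x - y) \<ge> \<epsilon> \<longrightarrow>
        norm ((1/2) *\<^sub>R (x + y)) \<le> 1 - \<delta>)"

end

theory Submission
  imports Defs
begin

text \<open>Testing the uniform sBPBp of \<open>(X,Y)\<close> against the rank-one operators \<open>v \<mapsto> g v \<cdot> u\<close>
  (in the complex case, against the complexification of a real functional \<open>g\<close> tensored with a
  unit vector \<open>u\<close>) shows that every norm-one real functional with value close to \<open>1\<close> at a unit
  vector \<open>x\<close> attains its norm at a unit vector close to \<open>x\<close>, uniformly.
  If \<open>X\<close> were not uniformly convex, there would be unit vectors \<open>x, y\<close> with \<open>\<parallel>x - y\<parallel> \<ge> \<epsilon>\<close> and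
  \<open>\<parallel>x + y\<parallel>\<close> close to \<open>2\<close>. Let \<open>f\<close> norm \<open>x + y\<close> and \<open>h\<close> norm \<open>y - x\<close>; for small \<open>t\<close> the
  functional \<open>f + t h\<close> almost attains its norm at \<open>x\<close>, but near \<open>x\<close> its values stay below its
  value at \<open>y\<close>, so it cannot attain its norm near \<open>x\<close>.

  The norming functionals come from the Hahn--Banach theorem, in the form: a minimal sublinear
  functional below the norm is linear.\<close>

definition sublinear :: "('a::real_vector \<Rightarrow> real) \<Rightarrow> bool" where
  "sublinear q \<longleftrightarrow> (\<forall>x y. q (x + y) \<le> q x + q y) \<and> (\<forall>a x. a \<ge> 0 \<longrightarrow> q (a *\<^sub>R x) = a * q x)"

lemma sublinear_add: "sublinear q \<Longrightarrow> q (x + y) \<le> q x + q y"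
  by (simp add: sublinear_def)

lemma sublinear_scale: "sublinear q \<Longrightarrow> a \<ge> 0 \<Longrightarrow> q (a *\<^sub>R x) = a * q x"
  by (simp add: sublinear_def)

lemma sublinear_zero: "sublinear q \<Longrightarrow> q 0 = 0"
  using sublinear_scale[of q 0 0] by simp

lemma sublinear_minus_le: "sublinear q \<Longrightarrow> - q (- x) \<le> q x"
  using sublinear_add[of q x "- x"] sublinear_zero[of q] by simp

lemma sublinear_norm: "sublinear norm"
  unfolding sublinear_def by (auto simp: norm_triangle_ineq)

subsection \<open>Hahn--Banach via minimal sublinear functionals\<close>

text \<open>Minimality of \<open>q\<close> against \<open>reduce_along q z\<close> forces \<open>q (- z) = - q z\<close>.\<close>

definition reduce_along :: "('a::real_vector \<Rightarrow> real) \<Rightarrow> 'a \<Rightarrow> 'a \<Rightarrow> real" where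
  "reduce_along q z x = (INF t\<in>{0..}. q (x + t *\<^sub>R z) - t * q z)"

lemma reduce_along_bdd_below:
  assumes "sublinear q"
  shows "bdd_below ((\<lambda>t. q (x + t *\<^sub>R z) - t * q z) ` {0..})"
proof (rule bdd_belowI2[where m = "- q (- x)"])
  fix t :: real assume "t \<in> {0..}"
  moreover have "q (t *\<^sub>R z) \<le> q (x + t *\<^sub>R z) + q (- x)"
    using sublinear_add[OF assms, of "x + t *\<^sub>R z" "- x"] by simp
  ultimately show "- q (- x) \<le> q (x + t *\<^sub>R z) - t * q z"
    using sublinear_scale[OF assms] by simp
qed

lemma reduce_along_le:
  "sublinear q \<Longrightarrow> t \<ge> 0 \<Longrightarrow> reduce_along q z x \<le> q (x + t *\<^sub>R z) - t * q z"
  unfolding reduce_along_def by (intro cINF_lower reduce_along_bdd_below) auto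

lemma reduce_along_greatest:
  "(\<And>t. t \<ge> 0 \<Longrightarrow> m \<le> q (x + t *\<^sub>R z) - t * q z) \<Longrightarrow> m \<le> reduce_along q z x"
  unfolding reduce_along_def by (intro cINF_greatest) auto

lemma reduce_along_le_self: "sublinear q \<Longrightarrow> reduce_along q z x \<le> q x"
  using reduce_along_le[of q 0 z x] by simp

lemma reduce_along_minus: "sublinear q \<Longrightarrow> reduce_along q z (- z) \<le> - q z"
  using reduce_along_le[of q 1 z "- z"] sublinear_zero[of q] by simp

lemma reduce_along_add:
  assumes q: "sublinear q"
  shows "reduce_along q z (x + y) \<le> reduce_along q z x + reduce_along q z y"
proof -
  have "reduce_along q z (x + y) - (q (y + t *\<^sub>R z) - t * q z) \<le> reduce_along q z x"
    if t: "t \<ge> 0" for t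
  proof (rule reduce_along_greatest)
    fix s :: real assume s: "s \<ge> 0"
    have "reduce_along q z (x + y) \<le> q ((x + y) + (s + t) *\<^sub>R z) - (s + t) * q z"
      using reduce_along_le[OF q, of "s + t"] s t by simp
    also have "q ((x + y) + (s + t) *\<^sub>R z) \<le> q (x + s *\<^sub>R z) + q (y + t *\<^sub>R z)"
      using sublinear_add[OF q, of "x + s *\<^sub>R z" "y + t *\<^sub>R z"]
      by (simp add: algebra_simps scaleR_add_left)
    finally show "reduce_along q z (x + y) - (q (y + t *\<^sub>R z) - t * q z)
        \<le> q (x + s *\<^sub>R z) - s * q z"
      by (simp add: algebra_simps)
  qed
  then have "reduce_along q z (x + y) - reduce_along q z x \<le> reduce_along q z y"
    by (intro reduce_along_greatest) (auto simp: algebra_simps)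
  then show ?thesis
    by simp
qed

lemma reduce_along_scale:
  assumes q: "sublinear q" and "a > 0"
  shows "reduce_along q z (a *\<^sub>R x) = a * reduce_along q z x"
proof -
  have scale: "q (a *\<^sub>R x + (a * s) *\<^sub>R z) - (a * s) * q z = a * (q (x + s *\<^sub>R z) - s * q z)" for s
    using sublinear_scale[OF q, of a "x + s *\<^sub>R z"] \<open>a > 0\<close> by (simp add: scaleR_add_right algebra_simps)
  have "reduce_along q z (a *\<^sub>R x) / a \<le> reduce_along q z x"
  proof (rule reduce_along_greatest)
    fix s :: real assume "s \<ge> 0"
    then have "reduce_along q z (a *\<^sub>R x) \<le> a * (q (x + s *\<^sub>R z) - s * q z)"
      using reduce_along_le[OF q, of "a * s" z "a *\<^sub>R x"] scale[of s] \<open>a > 0\<close> by simp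
    then show "reduce_along q z (a *\<^sub>R x) / a \<le> q (x + s *\<^sub>R z) - s * q z"
      using \<open>a > 0\<close> by (simp add: divide_le_eq mult.commute)
  qed
  moreover have "a * reduce_along q z x \<le> reduce_along q z (a *\<^sub>R x)"
  proof (rule reduce_along_greatest)
    fix t :: real assume "t \<ge> 0"
    then have "a * reduce_along q z x \<le> a * (q (x + (t / a) *\<^sub>R z) - (t / a) * q z)"
      using reduce_along_le[OF q, of "t / a"] \<open>a > 0\<close> by simp
    also have "\<dots> = q (a *\<^sub>R x + t *\<^sub>R z) - t * q z"
      using scale[of "t / a"] \<open>a > 0\<close> by simp
    finally show "a * reduce_along q z x \<le> q (a *\<^sub>R x + t *\<^sub>R z) - t * q z" .
  qed
  ultimately show ?thesis
    using \<open>a > 0\<close> by (simp add: divide_le_eq mult.commute)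
qed

lemma reduce_along_zero:
  assumes q: "sublinear q"
  shows "reduce_along q z 0 = 0"
proof (rule antisym)
  show "reduce_along q z 0 \<le> 0"
    using reduce_along_le_self[OF q, of z 0] sublinear_zero[OF q] by simp
  show "0 \<le> reduce_along q z 0"
    by (rule reduce_along_greatest) (simp add: sublinear_scale[OF q])
qed

lemma sublinear_reduce_along:
  assumes "sublinear q"
  shows "sublinear (reduce_along q z)"
  unfolding sublinear_def
  using reduce_along_add[OF assms] reduce_along_scale[OF assms] reduce_along_zero[OF assms]
  by (metis less_eq_real_def mult_zero_left scaleR_zero_left)

lemma minimal_sublinear_imp_linear:
  assumes q: "sublinear q"
    and minimal: "\<And>q'. sublinear q' \<Longrightarrow> (\<And>x. q' x \<le> q x) \<Longrightarrow> q' = q"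
  shows "linear q"
proof -
  have minus: "q (- z) = - q z" for z
  proof -
    have "reduce_along q z = q"
      using minimal[OF sublinear_reduce_along[OF q]] reduce_along_le_self[OF q] by blast
    then have "q (- z) \<le> - q z"
      using reduce_along_minus[OF q, of z] by simp
    then show ?thesis
      using sublinear_minus_le[OF q, of z] by simp
  qed
  have add: "q (x + y) = q x + q y" for x y
    using sublinear_add[OF q, of x y] sublinear_add[OF q, of "- x" "- y"]
      minus[of "x + y"] minus[of x] minus[of y] by (simp add: algebra_simps)
  have scale: "q (r *\<^sub>R x) = r * q x" for r x
  proof (cases "r \<ge> 0")
    case False
    then show ?thesis
      using minus[of "(- r) *\<^sub>R x"] sublinear_scale[OF q, of "- r" x] by simp
  qed (simp add: sublinear_scale[OF q])
  show ?thesis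
    by (rule linearI) (simp_all add: add scale)
qed

lemma sublinear_INF_chain:
  assumes "C \<noteq> {}"
    and sublinear: "\<And>a. a \<in> C \<Longrightarrow> sublinear a"
    and chain: "\<And>a b. a \<in> C \<Longrightarrow> b \<in> C \<Longrightarrow> (\<forall>x. a x \<le> b x) \<or> (\<forall>x. b x \<le> a x)"
    and bdd: "\<And>x. bdd_below ((\<lambda>a. a x) ` C)"
  shows "sublinear (\<lambda>x. INF a\<in>C. a x)" (is "sublinear ?u")
proof -
  have lower: "?u x \<le> a x" if "a \<in> C" for a x
    by (rule cINF_lower[OF bdd that])
  have greatest: "m \<le> ?u x" if "\<And>a. a \<in> C \<Longrightarrow> m \<le> a x" for m x
    using \<open>C \<noteq> {}\<close> that by (intro cINF_greatest) auto
  have add: "?u (x + y) \<le> ?u x + ?u y" for x y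
  proof (rule ccontr)
    assume gt: "\<not> ?u (x + y) \<le> ?u x + ?u y"
    define e where "e = (?u (x + y) - ?u x - ?u y) / 4"
    have e: "e > 0" "?u x + ?u y + 2 * e < ?u (x + y)"
      using gt unfolding e_def by (auto simp: field_simps)
    obtain a where a: "a \<in> C" "a x < ?u x + e"
      using greatest[of "?u x + e" x] e by force
    obtain b where b: "b \<in> C" "b y < ?u y + e"
      using greatest[of "?u y + e" y] e by force
    text \<open>The smaller of \<open>a\<close> and \<open>b\<close> is nearly minimal at both \<open>x\<close> and \<open>y\<close>.\<close>
    from chain[OF a(1) b(1)] obtain c where "c \<in> C" "c x < ?u x + e" "c y < ?u y + e"
      using a b by (metis le_less_trans)
    then show False
      using lower[of c "x + y"] sublinear_add[OF sublinear, of c x y] e by linarith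
  qed
  have scale: "?u (r *\<^sub>R x) = r * ?u x" if "r > 0" for r x
  proof (rule antisym)
    have "?u (r *\<^sub>R x) / r \<le> ?u x"
      by (rule greatest) (use lower sublinear_scale[OF sublinear] that in \<open>simp add: divide_le_eq mult.commute\<close>)
    then show "?u (r *\<^sub>R x) \<le> r * ?u x"
      using that by (simp add: divide_le_eq mult.commute)
    show "r * ?u x \<le> ?u (r *\<^sub>R x)"
    proof (rule greatest)
      fix a assume "a \<in> C"
      then show "r * ?u x \<le> a (r *\<^sub>R x)"
        using lower[of a x] sublinear_scale[OF sublinear[OF \<open>a \<in> C\<close>], of r x] that by simp
    qed
  qed
  have "?u 0 = 0"
  proof (rule antisym)
    obtain a where "a \<in> C"
      using \<open>C \<noteq> {}\<close> by blast
    then show "?u 0 \<le> 0"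
      using lower[of a 0] sublinear_zero[OF sublinear[OF \<open>a \<in> C\<close>]] by simp
    show "0 \<le> ?u 0"
      by (rule greatest) (simp add: sublinear_zero[OF sublinear])
  qed
  then show ?thesis
    unfolding sublinear_def using add scale
    by (metis less_eq_real_def mult_zero_left scaleR_zero_left)
qed

lemma bdd_below_sublinear_below:
  assumes "\<And>a. a \<in> C \<Longrightarrow> sublinear a \<and> (\<forall>x. a x \<le> p x)"
  shows "bdd_below ((\<lambda>a. a x) ` C)"
proof (rule bdd_belowI2[where m = "- p (- x)"])
  fix a assume "a \<in> C"
  then have "sublinear a" "a (- x) \<le> p (- x)"
    using assms by auto
  then show "- p (- x) \<le> a x"
    using sublinear_minus_le[of a x] by linarith
qed

lemma exists_minimal_sublinear_below:
  assumes p: "sublinear (p :: 'a::real_vector \<Rightarrow> real)"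
  obtains m where "sublinear m" "\<And>x. m x \<le> p x"
    "\<And>q. sublinear q \<Longrightarrow> (\<And>x. q x \<le> m x) \<Longrightarrow> q = m"
proof -
  define A where "A = {q. sublinear q \<and> (\<forall>x. q x \<le> p x)}"
  define below where "below = (\<lambda>q1 q2 :: 'a \<Rightarrow> real. \<forall>x. q2 x \<le> q1 x)"
  have "partial_order_on A (relation_of below A)"
    unfolding below_def
    by (rule partial_order_on_relation_ofI) (auto intro: order_trans, meson antisym ext)
  moreover have "\<exists>u\<in>A. \<forall>a\<in>C. below a u" if C: "C \<in> Chains (relation_of below A)" for C
  proof (cases "C = {}")
    case True
    then show ?thesis
      using p unfolding A_def by auto
  next
    case False
    have CA: "\<And>a. a \<in> C \<Longrightarrow> sublinear a \<and> (\<forall>x. a x \<le> p x)"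
      using C unfolding Chains_def relation_of_def A_def by auto
    define u where "u x = (INF a\<in>C. a x)" for x
    have "sublinear u"
      unfolding u_def
    proof (rule sublinear_INF_chain[OF False _ _ bdd_below_sublinear_below[OF CA]])
      show "(\<forall>x. a x \<le> b x) \<or> (\<forall>x. b x \<le> a x)" if "a \<in> C" "b \<in> C" for a b
        using C that unfolding Chains_def relation_of_def below_def by blast
    qed (use CA in blast)
    moreover have u_le: "u x \<le> a x" if "a \<in> C" for a x
      unfolding u_def by (rule cINF_lower[OF bdd_below_sublinear_below[OF CA] that])
    moreover have "u x \<le> p x" for x
      using False CA u_le by (meson all_not_in_conv order_trans)
    ultimately show ?thesis
      unfolding A_def below_def by auto
  qed
  ultimately obtain m where m: "m \<in> A" "\<And>a. a \<in> A \<Longrightarrow> below m a \<Longrightarrow> a = m"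
    using predicate_Zorn by (metis (no_types, lifting))
  show ?thesis
  proof
    show "sublinear m" "\<And>x. m x \<le> p x"
      using m(1) unfolding A_def by auto
    fix q assume q: "sublinear q" "\<And>x. q x \<le> m x"
    then have "q \<in> A"
      using \<open>\<And>x. m x \<le> p x\<close> unfolding A_def by (auto intro: order_trans)
    moreover have "below m q"
      using q unfolding below_def by simp
    ultimately show "q = m"
      using m(2) by blast
  qed
qed

lemma norming_functional:
  fixes w :: "'a::real_normed_vector"
  obtains f :: "'a \<Rightarrow> real" where "linear f" "\<And>x. \<bar>f x\<bar> \<le> norm x" "f w = norm w"
proof -
  obtain m where m: "sublinear m" "\<And>x. m x \<le> reduce_along norm w x"
    "\<And>q. sublinear q \<Longrightarrow> (\<And>x. q x \<le> m x) \<Longrightarrow> q = m"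
    using exists_minimal_sublinear_below[OF sublinear_reduce_along[OF sublinear_norm]] by blast
  have lin: "linear m"
    using minimal_sublinear_imp_linear[OF m(1) m(3)] by blast
  have le: "m x \<le> norm x" for x
    using m(2) reduce_along_le_self[OF sublinear_norm] order_trans by blast
  have "- m w = m (- w)"
    using linear_neg[OF lin] by simp
  also have "\<dots> \<le> - norm w"
    using m(2) reduce_along_minus[OF sublinear_norm, of w] order_trans by blast
  finally have "m w = norm w"
    using le[of w] by simp
  moreover have "\<bar>m x\<bar> \<le> norm x" for x
    using le[of x] le[of "- x"] linear_neg[OF lin, of x] by simp
  ultimately show ?thesis
    using lin that by blast
qed

subsection \<open>Uniform strong Bishop--Phelps--Bollob\'as property for functionals\<close>

definition uniform_sBPBp_functionals :: "'a::real_normed_vector itself \<Rightarrow> bool" where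
  "uniform_sBPBp_functionals _ \<longleftrightarrow>
     (\<forall>\<epsilon>>0. \<exists>\<eta>>0. \<forall>(g :: 'a \<Rightarrow> real) x. bounded_linear g \<and> onorm g = 1 \<and> norm x = 1 \<and> g x > 1 - \<eta>
        \<longrightarrow> (\<exists>z. norm z = 1 \<and> g z = 1 \<and> norm (z - x) < \<epsilon>))"

lemma uniform_sBPBp_functionalsD:
  assumes "uniform_sBPBp_functionals TYPE('a::real_normed_vector)" "\<epsilon> > 0"
  obtains \<eta> where "\<eta> > 0"
    "\<And>(G :: 'a \<Rightarrow> real) x. bounded_linear G \<Longrightarrow> onorm G > 0 \<Longrightarrow> norm x = 1 \<Longrightarrow>
       G x > (1 - \<eta>) * onorm G \<Longrightarrow> \<exists>z. norm z = 1 \<and> G z = onorm G \<and> norm (z - x) < \<epsilon>"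
proof -
  obtain \<eta> where "\<eta> > 0" and attain: "\<And>(g :: 'a \<Rightarrow> real) x. bounded_linear g \<Longrightarrow> onorm g = 1 \<Longrightarrow>
      norm x = 1 \<Longrightarrow> g x > 1 - \<eta> \<Longrightarrow> \<exists>z. norm z = 1 \<and> g z = 1 \<and> norm (z - x) < \<epsilon>"
    using assms unfolding uniform_sBPBp_functionals_def by meson
  show ?thesis
  proof (rule that[OF \<open>\<eta> > 0\<close>])
    fix G :: "'a \<Rightarrow> real" and x
    assume G: "bounded_linear G" "onorm G > 0" and x: "norm x = 1" "G x > (1 - \<eta>) * onorm G"
    define g where "g v = (1 / onorm G) *\<^sub>R G v" for v
    have "bounded_linear g"
      unfolding g_def by (rule bounded_linear_compose[OF bounded_linear_scaleR_right G(1)])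
    moreover have "onorm g = 1"
      unfolding g_def using onorm_scaleR[OF G(1), of "1 / onorm G"] G(2) by simp
    moreover have "g x > 1 - \<eta>"
      unfolding g_def using x(2) G(2) by (simp add: field_simps)
    ultimately obtain z where "norm z = 1" "g z = 1" "norm (z - x) < \<epsilon>"
      using attain x(1) by blast
    then show "\<exists>z. norm z = 1 \<and> G z = onorm G \<and> norm (z - x) < \<epsilon>"
      unfolding g_def using G(2) by (auto simp: field_simps)
  qed
qed

lemma linear_bounded_onorm_le:
  assumes "linear f" "\<And>v. norm (f v) \<le> C * norm v" "C \<ge> 0"
  shows "bounded_linear f" "onorm f \<le> C"
proof -
  show "bounded_linear f"
    using assms by (intro bounded_linear_intro[where K = C]) (auto simp: linear_add linear_scale mult.commute)
  show "onorm f \<le> C"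
    using assms by (intro onorm_bound) auto
qed

lemma norm_add_le_if_uniform_attainment:
  fixes x y :: "'a::real_normed_vector"
  assumes attain: "\<And>(G :: 'a \<Rightarrow> real) x. bounded_linear G \<Longrightarrow> onorm G > 0 \<Longrightarrow> norm x = 1 \<Longrightarrow>
      G x > (1 - \<eta>) * onorm G \<Longrightarrow> \<exists>z. norm z = 1 \<and> G z = onorm G \<and> norm (z - x) < \<epsilon> / 2"
    and \<eta>: "0 < \<eta>" "\<eta> \<le> 1 / 2" and "\<epsilon> > 0"
    and x: "norm x = 1" and y: "norm y = 1" and far: "\<epsilon> \<le> norm (y - x)"
  shows "norm (x + y) \<le> 2 - 2 * min (\<eta> * \<epsilon> / 32) (\<eta> / 8)"
proof (rule ccontr)
  define t where "t = \<eta> / 4"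
  define \<delta> where "\<delta> = min (\<eta> * \<epsilon> / 32) (\<eta> / 8)"
  have "t > 0" and \<delta>: "\<delta> \<le> t * \<epsilon> / 8" "\<delta> \<le> \<eta> / 8"
    using \<eta> unfolding t_def \<delta>_def by auto
  assume "\<not> norm (x + y) \<le> 2 - 2 * min (\<eta> * \<epsilon> / 32) (\<eta> / 8)"
  then have close: "norm (x + y) > 2 - 2 * \<delta>"
    unfolding \<delta>_def by simp
  obtain f :: "'a \<Rightarrow> real" where f: "linear f" "\<And>v. \<bar>f v\<bar> \<le> norm v" "f (x + y) = norm (x + y)"
    using norming_functional[of "x + y"] by blast
  obtain h :: "'a \<Rightarrow> real" where h: "linear h" "\<And>v. \<bar>h v\<bar> \<le> norm v" "h (y - x) = norm (y - x)"
    using norming_functional[of "y - x"] by blast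
  have fx: "f x > 1 - 2 * \<delta>" and fy: "f y > 1 - 2 * \<delta>"
    using f(2)[of x] f(2)[of y] f(3) close x y linear_add[OF f(1), of x y] by auto
  have hxy: "h x \<le> h y - \<epsilon>" and hx: "h x \<ge> -1"
    using h(2)[of x] h(3) far x linear_diff[OF h(1), of y x] by auto
  define G where "G v = f v + t * h v" for v
  have "\<bar>G v\<bar> \<le> (1 + t) * norm v" for v
  proof -
    have "\<bar>t * h v\<bar> \<le> t * norm v"
      using h(2)[of v] \<open>t > 0\<close> by (simp add: abs_mult mult_left_mono)
    then show ?thesis
      using f(2)[of v] unfolding G_def by (simp add: algebra_simps)
  qed
  moreover have "linear G"
    unfolding G_def using f(1) h(1) by (intro linearI) (simp_all add: linear_add linear_scale algebra_simps)
  ultimately have G: "bounded_linear G" "onorm G \<le> 1 + t"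
    using linear_bounded_onorm_le[of G "1 + t"] \<open>t > 0\<close> by auto
  have G_le: "G v \<le> onorm G" if "norm v = 1" for v
    using onorm[OF G(1), of v] that by simp
  have Gx: "G x \<ge> 1 - 2 * \<delta> - t"
    using fx mult_left_mono[OF hx, of t] \<open>t > 0\<close> unfolding G_def by simp
  have "onorm G > 0"
    using G_le[OF x] Gx \<delta> \<eta> unfolding t_def by linarith
  text \<open>The choice \<open>t = \<eta>/4\<close>, \<open>\<delta> \<le> \<eta>/8\<close> makes \<open>G\<close> almost attain its norm at \<open>x\<close>.\<close>
  have "(1 - \<eta>) * onorm G \<le> (1 - \<eta>) * (1 + t)"
    using \<eta> G(2) by (intro mult_left_mono) auto
  also have "\<dots> = 1 - 3 * \<eta> / 4 - \<eta> * \<eta> / 4"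
    unfolding t_def by (simp add: field_simps)
  also have "\<dots> < G x"
    using Gx \<delta> \<eta> zero_le_square[of \<eta>] unfolding t_def by linarith
  finally obtain z where z: "norm z = 1" "G z = onorm G" "norm (z - x) < \<epsilon> / 2"
    using attain[OF G(1) \<open>onorm G > 0\<close> x] by blast
  have "h z - h x \<le> norm (z - x)"
    using h(2)[of "z - x"] linear_diff[OF h(1), of z x] by simp
  then have "t * h z < t * (h y - \<epsilon> / 2)"
    using z(3) hxy \<open>t > 0\<close> by simp
  then have "G z < 1 + t * h y - t * \<epsilon> / 2"
    using f(2)[of z] z(1) unfolding G_def by (simp add: algebra_simps)
  moreover have "G y > 1 - 2 * \<delta> + t * h y"
    using fy unfolding G_def by simp
  ultimately show False
    using G_le[OF y] z(2) \<delta>(1) mult_pos_pos[OF \<open>t > 0\<close> \<open>\<epsilon> > 0\<close>] by linarith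
qed

lemma uniformly_convex_if_uniform_sBPBp_functionals:
  assumes sBPBp: "uniform_sBPBp_functionals TYPE('a::real_normed_vector)"
  shows "uniformly_convex TYPE('a)"
  unfolding uniformly_convex_def
proof (intro allI impI)
  fix \<epsilon> :: real assume "\<epsilon> > 0"
  then obtain \<eta>0 where "\<eta>0 > 0" and attain: "\<And>(G :: 'a \<Rightarrow> real) x. bounded_linear G \<Longrightarrow>
      onorm G > 0 \<Longrightarrow> norm x = 1 \<Longrightarrow> G x > (1 - \<eta>0) * onorm G \<Longrightarrow>
      \<exists>z. norm z = 1 \<and> G z = onorm G \<and> norm (z - x) < \<epsilon> / 2"
    using uniform_sBPBp_functionalsD[OF sBPBp, of "\<epsilon> / 2"] by auto
  define \<eta> where "\<eta> = min \<eta>0 (1 / 2)"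
  have \<eta>: "0 < \<eta>" "\<eta> \<le> 1 / 2"
    using \<open>\<eta>0 > 0\<close> unfolding \<eta>_def by auto
  have attain_\<eta>: "\<exists>z. norm z = 1 \<and> G z = onorm G \<and> norm (z - x) < \<epsilon> / 2"
    if "bounded_linear G" "onorm G > 0" "norm x = 1" "G x > (1 - \<eta>) * onorm G" for G :: "'a \<Rightarrow> real" and x
  proof (rule attain[OF that(1-3)])
    have "(1 - \<eta>0) * onorm G \<le> (1 - \<eta>) * onorm G"
      using that(2) unfolding \<eta>_def by (intro mult_right_mono) auto
    then show "G x > (1 - \<eta>0) * onorm G"
      using that(4) by linarith
  qed
  show "\<exists>\<delta>>0. \<forall>x y :: 'a. norm x = 1 \<and> norm y = 1 \<and> \<epsilon> \<le> norm (x - y) \<longrightarrow>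
      norm ((1 / 2) *\<^sub>R (x + y)) \<le> 1 - \<delta>"
  proof (intro exI[of _ "min (\<eta> * \<epsilon> / 32) (\<eta> / 8)"] conjI allI impI)
    fix x y :: 'a assume "norm x = 1 \<and> norm y = 1 \<and> \<epsilon> \<le> norm (x - y)"
    then have x: "norm x = 1" and y: "norm y = 1" and far: "\<epsilon> \<le> norm (y - x)"
      by (auto simp: norm_minus_commute)
    have "norm (x + y) \<le> 2 - 2 * min (\<eta> * \<epsilon> / 32) (\<eta> / 8)"
      using norm_add_le_if_uniform_attainment[where \<eta> = \<eta> and \<epsilon> = \<epsilon>, OF attain_\<eta> \<eta> \<open>\<epsilon> > 0\<close> x y far] .
    then show "norm ((1 / 2) *\<^sub>R (x + y)) \<le> 1 - min (\<eta> * \<epsilon> / 32) (\<eta> / 8)"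
      by simp
  qed (use \<eta> \<open>\<epsilon> > 0\<close> in simp)
qed

subsection \<open>Reduction to functionals\<close>

lemma uniform_sBPBp_functionals_if_real:
  fixes u :: "'b::real_normed_vector"
  assumes u: "norm u = 1"
    and sBPBp: "uniform_sBPBp (real_operators :: ('a::real_normed_vector \<Rightarrow> 'b) set)"
  shows "uniform_sBPBp_functionals TYPE('a)"
  unfolding uniform_sBPBp_functionals_def
proof (intro allI impI)
  fix \<epsilon> :: real assume "\<epsilon> > 0"
  then have "min \<epsilon> (1 / 2) > 0"
    by simp
  then obtain \<eta>0 where "\<eta>0 > 0" and attain: "\<forall>T\<in>(real_operators :: ('a \<Rightarrow> 'b) set). \<forall>x0.
      onorm T = 1 \<and> norm x0 = 1 \<and> norm (T x0) > 1 - \<eta>0 \<longrightarrow>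
      (\<exists>x1. norm x1 = 1 \<and> norm (T x1) = 1 \<and> norm (x1 - x0) < min \<epsilon> (1 / 2))"
    using sBPBp unfolding uniform_sBPBp_def by blast
  show "\<exists>\<eta>>0. \<forall>(g :: 'a \<Rightarrow> real) x. bounded_linear g \<and> onorm g = 1 \<and> norm x = 1 \<and> g x > 1 - \<eta>
      \<longrightarrow> (\<exists>z. norm z = 1 \<and> g z = 1 \<and> norm (z - x) < \<epsilon>)"
  proof (intro exI[of _ "min \<eta>0 (1 / 2)"] conjI allI impI)
    fix g :: "'a \<Rightarrow> real" and x
    assume "bounded_linear g \<and> onorm g = 1 \<and> norm x = 1 \<and> g x > 1 - min \<eta>0 (1 / 2)"
    then have g: "bounded_linear g" "onorm g = 1" and x: "norm x = 1" "g x > 1 - min \<eta>0 (1 / 2)"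
      by auto
    define T where "T v = g v *\<^sub>R u" for v
    have "T \<in> real_operators"
      unfolding T_def real_operators_def using bounded_linear_scaleR_const[OF g(1)] by simp
    moreover have "onorm T = 1"
      unfolding T_def using onorm_scaleR_left[OF g(1), of u] g(2) u by simp
    moreover have "norm (T x) > 1 - \<eta>0"
      unfolding T_def using u x(2) by auto
    ultimately
    obtain x1 where x1: "norm x1 = 1" "norm (T x1) = 1" "norm (x1 - x) < min \<epsilon> (1 / 2)"
      using attain x(1) by blast
    have "\<bar>g (x1 - x)\<bar> \<le> norm (x1 - x)"
      using onorm[OF g(1), of "x1 - x"] g(2) by simp
    then have "g x1 > 0"
      using x(2) x1(3) linear_diff[OF bounded_linear.linear[OF g(1)], of x1 x] by linarith
    moreover have "\<bar>g x1\<bar> = 1"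
      using x1(2) u unfolding T_def by simp
    ultimately show "\<exists>z. norm z = 1 \<and> g z = 1 \<and> norm (z - x) < \<epsilon>"
      using x1 by auto
  qed (use \<open>\<eta>0 > 0\<close> in simp)
qed

lemma complex_structureD:
  assumes "complex_structure J"
  shows "linear J" "J (J x) = - x" "norm (a *\<^sub>R x + b *\<^sub>R J x) = sqrt (a\<^sup>2 + b\<^sup>2) * norm x"
  using assms unfolding complex_structure_def by auto

lemma complexified_functional:
  assumes JX: "complex_structure JX" and JY: "complex_structure JY"
    and g: "bounded_linear (g :: 'a::real_normed_vector \<Rightarrow> real)" "onorm g = 1"
    and u: "norm (u :: 'b::real_normed_vector) = 1"
  defines "T \<equiv> \<lambda>v. g v *\<^sub>R u - g (JX v) *\<^sub>R JY u"
  shows "T \<in> complex_operators JX JY" "onorm T = 1"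
    "\<And>v. norm (T v) = sqrt ((g v)\<^sup>2 + (g (JX v))\<^sup>2)"
proof -
  have glin: "linear g"
    using g(1) bounded_linear.linear by blast
  have g_le: "\<bar>g v\<bar> \<le> norm v" for v
    using onorm[OF g(1), of v] g(2) by simp
  show norm_T: "norm (T v) = sqrt ((g v)\<^sup>2 + (g (JX v))\<^sup>2)" for v
    using complex_structureD(3)[OF JY, of "g v" u "- g (JX v)"] u unfolding T_def by simp
  have T_le: "norm (T v) \<le> norm v" for v
  proof -
    define s where "s = sqrt ((g v)\<^sup>2 + (g (JX v))\<^sup>2)"
    have "s * s = g (g v *\<^sub>R v + g (JX v) *\<^sub>R JX v)"
      using glin unfolding s_def by (simp add: linear_add linear_scale power2_eq_square)
    also have "\<dots> \<le> s * norm v"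
      using g_le[of "g v *\<^sub>R v + g (JX v) *\<^sub>R JX v"] complex_structureD(3)[OF JX] unfolding s_def by simp
    finally have "s * s \<le> s * norm v" .
    moreover have "s \<ge> 0"
      unfolding s_def by simp
    ultimately have "s \<le> norm v"
      by (cases "s = 0") (simp_all add: mult_le_cancel_left_pos)
    then show ?thesis
      using norm_T unfolding s_def by simp
  qed
  have "linear T"
    unfolding T_def using glin complex_structureD(1)[OF JX]
    by (intro linearI) (simp_all add: linear_add linear_scale algebra_simps scaleR_add_left)
  then have T: "bounded_linear T" "onorm T \<le> 1"
    using linear_bounded_onorm_le[of T 1] T_le by auto
  moreover have "T (JX v) = JY (T v)" for v
    unfolding T_def using complex_structureD[OF JX] complex_structureD[OF JY] linear_neg[OF glin]
    by (simp add: linear_diff linear_scale)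
  ultimately show "T \<in> complex_operators JX JY"
    unfolding complex_operators_def by simp
  have "norm (g v) \<le> onorm T * norm v" for v
  proof -
    have "norm (g v) \<le> norm (T v)"
      unfolding norm_T using real_sqrt_ge_abs1[of "g v" "g (JX v)"] by simp
    then show ?thesis
      using onorm[OF T(1), of v] by linarith
  qed
  then have "onorm g \<le> onorm T"
    by (rule onorm_bound[OF onorm_pos_le[OF T(1)]])
  then show "onorm T = 1"
    using g(2) T(2) by simp
qed

lemma complex_structure_rotation:
  assumes J: "complex_structure J" and g: "linear (g :: 'a::real_normed_vector \<Rightarrow> real)"
    and x: "norm x = 1" and unit: "(g x)\<^sup>2 + (g (J x))\<^sup>2 = 1"
  defines "z \<equiv> g x *\<^sub>R x + g (J x) *\<^sub>R J x"
  shows "norm z = 1" "g z = 1" "norm (z - x) = sqrt (2 - 2 * g x)"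
proof -
  show "norm z = 1"
    unfolding z_def using complex_structureD(3)[OF J] unit x by simp
  show "g z = 1"
    unfolding z_def using g unit by (simp add: linear_add linear_scale power2_eq_square)
  have "z - x = (g x - 1) *\<^sub>R x + g (J x) *\<^sub>R J x"
    unfolding z_def by (simp add: algebra_simps)
  then have "norm (z - x) = sqrt ((g x - 1)\<^sup>2 + (g (J x))\<^sup>2)"
    using complex_structureD(3)[OF J] x by simp
  also have "(g x - 1)\<^sup>2 + (g (J x))\<^sup>2 = 2 - 2 * g x"
    using unit by (simp add: power2_eq_square algebra_simps)
  finally show "norm (z - x) = sqrt (2 - 2 * g x)" .
qed

lemma uniform_sBPBp_functionals_if_complex:
  fixes u :: "'b::real_normed_vector" and JX :: "'a::real_normed_vector \<Rightarrow> 'a" and JY :: "'b \<Rightarrow> 'b"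
  assumes u: "norm u = 1" and JX: "complex_structure JX" and JY: "complex_structure JY"
    and sBPBp: "uniform_sBPBp (complex_operators JX JY)"
  shows "uniform_sBPBp_functionals TYPE('a)"
  unfolding uniform_sBPBp_functionals_def
proof (intro allI impI)
  fix \<epsilon> :: real assume "\<epsilon> > 0"
  define \<epsilon>1 where "\<epsilon>1 = min (\<epsilon> / 2) ((\<epsilon> / 4)\<^sup>2)"
  have "\<epsilon>1 > 0"
    using \<open>\<epsilon> > 0\<close> unfolding \<epsilon>1_def by simp
  have "sqrt \<epsilon>1 \<le> sqrt ((\<epsilon> / 4)\<^sup>2)"
    unfolding \<epsilon>1_def by (intro real_sqrt_le_mono) simp
  then have sqrt_\<epsilon>1: "2 * sqrt \<epsilon>1 \<le> \<epsilon> / 2"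
    using \<open>\<epsilon> > 0\<close> by simp
  obtain \<eta>0 where "\<eta>0 > 0" and attain: "\<forall>T\<in>complex_operators JX JY. \<forall>x0.
      onorm T = 1 \<and> norm x0 = 1 \<and> norm (T x0) > 1 - \<eta>0 \<longrightarrow>
      (\<exists>x1. norm x1 = 1 \<and> norm (T x1) = 1 \<and> norm (x1 - x0) < \<epsilon>1)"
    using sBPBp \<open>\<epsilon>1 > 0\<close> unfolding uniform_sBPBp_def by blast
  show "\<exists>\<eta>>0. \<forall>(g :: 'a \<Rightarrow> real) x. bounded_linear g \<and> onorm g = 1 \<and> norm x = 1 \<and> g x > 1 - \<eta>
      \<longrightarrow> (\<exists>z. norm z = 1 \<and> g z = 1 \<and> norm (z - x) < \<epsilon>)"
  proof (intro exI[of _ "min \<eta>0 \<epsilon>1"] conjI allI impI)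
    fix g :: "'a \<Rightarrow> real" and x
    assume "bounded_linear g \<and> onorm g = 1 \<and> norm x = 1 \<and> g x > 1 - min \<eta>0 \<epsilon>1"
    then have g: "bounded_linear g" "onorm g = 1" and x: "norm x = 1" "g x > 1 - min \<eta>0 \<epsilon>1"
      by auto
    have glin: "linear g"
      using g(1) bounded_linear.linear by blast
    define T where "T v = g v *\<^sub>R u - g (JX v) *\<^sub>R JY u" for v
    note T = complexified_functional[OF JX JY g u, folded T_def]
    have "norm (T x) > 1 - \<eta>0"
      using T(3)[of x] real_sqrt_ge_abs1[of "g x" "g (JX x)"] x(2) by linarith
    then obtain x1 where x1: "norm x1 = 1" "norm (T x1) = 1" "norm (x1 - x) < \<epsilon>1"
      using attain T(1,2) x(1) by blast
    have unit: "(g x1)\<^sup>2 + (g (JX x1))\<^sup>2 = 1"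
      using x1(2) T(3)[of x1] by simp
    define z where "z = g x1 *\<^sub>R x1 + g (JX x1) *\<^sub>R JX x1"
    note z = complex_structure_rotation[OF JX glin x1(1) unit, folded z_def]
    have "\<bar>g (x1 - x)\<bar> \<le> norm (x1 - x)"
      using onorm[OF g(1), of "x1 - x"] g(2) by simp
    then have "g x1 > 1 - 2 * \<epsilon>1"
      using x(2) x1(3) linear_diff[OF glin, of x1 x] by linarith
    then have "norm (z - x1) < sqrt (4 * \<epsilon>1)"
      using z(3) by (simp add: real_sqrt_less_mono)
    also have "\<dots> = 2 * sqrt \<epsilon>1"
      by (simp add: real_sqrt_mult)
    finally have "norm (z - x) < \<epsilon>"
      using norm_triangle_ineq[of "z - x1" "x1 - x"] x1(3) sqrt_\<epsilon>1
      unfolding \<epsilon>1_def by simp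
    then show "\<exists>z. norm z = 1 \<and> g z = 1 \<and> norm (z - x) < \<epsilon>"
      using z(1,2) by blast
  qed (use \<open>\<eta>0 > 0\<close> \<open>\<epsilon>1 > 0\<close> in simp)
qed

theorem mainTheorem7:
  fixes JX :: "'a::banach \<Rightarrow> 'a" and JY :: "'b::banach \<Rightarrow> 'b"
  assumes Y_nontrivial: "\<exists>y::'b. y \<noteq> 0"
    and sBPBp: "uniform_sBPBp (real_operators :: ('a \<Rightarrow> 'b) set)
               \<or> (complex_structure JX \<and> complex_structure JY \<and>
                  uniform_sBPBp (complex_operators JX JY))"
  shows "uniformly_convex TYPE('a)"
proof -
  obtain y :: 'b where "y \<noteq> 0"
    using Y_nontrivial by blast
  then have u: "norm (y /\<^sub>R norm y) = 1"
    by simp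
  from sBPBp have "uniform_sBPBp_functionals TYPE('a)"
    using uniform_sBPBp_functionals_if_real[OF u] uniform_sBPBp_functionals_if_complex[OF u] by blast
  then show ?thesis
    by (rule uniformly_convex_if_uniform_sBPBp_functionals)
qed

end
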